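(* Let $a<b$, let $N\ge1$ and $T\ge1$. For a probability distribution function $F$ on $[a,b]$ and $y\in[a,b]$ let $\mathrm{CRPS}(F,y)=\int_a^b(F(u)-H(u-y))^2\,du$, where $H(x)=0$ for $x<0$ and $H(x)=1$ for $x\ge0$. Consider the online protocol: set $w_{i,1}=\frac1N$ for $1\le i\le N$; for $t=1,\dots,T$: experts $i=1,\dots,N$ announce probability distribution functions $F_{i,t}$ on $[a,b]$; the learner announces the weighted average $$F_t(u)=\sum_{i=1}^N w^*_{i,t}F_{i,t}(u),\qquad w^*_{i,t}=\frac{w_{i,t}}{\sum_{j=1}^N w_{j,t}};$$ an outcome $y_t\in[a,b]$ is revealed (arbitrarily, possibly adversarially); and the weights are updated by $w_{i,t+1}=w_{i,t}\,e^{-\frac{1}{2(b-a)}\mathrm{CRPS}(F_{i,t},y_t)}$. Then for every $1\le i\le N$, $$\sum_{t=1}^T\mathrm{CRPS}(F_t,y_t)\le\sum_{t=1}^T\mathrm{CRPS}(F_{i,t},y_t)+2(b-a)\ln N.$$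
   Context: A probability distribution function on $[a,b]$ is a non-decreasing function $F:[a,b]\to[0,1]$ with $F(a)=0$, $F(b)=1$, left-continuous and having a right limit at each point. *)

theory Defs
  imports "HOL-Analysis.Analysis"
begin

definition heaviside :: "real \<Rightarrow> real" where
  "heaviside x = (if x < 0 then 0 else 1)"

definition prob_dist_fun :: "real \<Rightarrow> real \<Rightarrow> (real \<Rightarrow> real) \<Rightarrow> bool" where
  "prob_dist_fun a b F \<longleftrightarrow>
     mono_on {a..b} F \<and>
     (\<forall>u\<in>{a..b}. 0 \<le> F u \<and> F u \<le> 1) \<and>
     F a = 0 \<and> F b = 1 \<and>
     (\<forall>u\<in>{a<..b}. (F \<longlongrightarrow> F u) (at u within {a..<u})) \<and>
     (\<forall>u\<in>{a..<b}. \<exists>L. (F \<longlongrightarrow> L) (at u within {u<..b}))"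

definition CRPS :: "real \<Rightarrow> real \<Rightarrow> (real \<Rightarrow> real) \<Rightarrow> real \<Rightarrow> real" where
  "CRPS a b F y = integral {a..b} (\<lambda>u. (F u - heaviside (u - y))\<^sup>2)"

text \<open>Weights w i t (t \<ge> 1) of the online protocol; F i t is the forecast of expert i at
  step t, y t the outcome at step t. Index t = 0 is unused; w i 1 = 1/N.\<close>
fun weight :: "real \<Rightarrow> real \<Rightarrow> nat \<Rightarrow> (nat \<Rightarrow> nat \<Rightarrow> real \<Rightarrow> real) \<Rightarrow> (nat \<Rightarrow> real)
                \<Rightarrow> nat \<Rightarrow> nat \<Rightarrow> real" where
  "weight a b N F y i 0 = 1 / real N"
| "weight a b N F y i (Suc 0) = 1 / real N"
| "weight a b N F y i (Suc (Suc t)) =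
     weight a b N F y i (Suc t) * exp (- (1 / (2 * (b - a))) * CRPS a b (F i (Suc t)) (y (Suc t)))"

definition learner :: "real \<Rightarrow> real \<Rightarrow> nat \<Rightarrow> (nat \<Rightarrow> nat \<Rightarrow> real \<Rightarrow> real) \<Rightarrow> (nat \<Rightarrow> real)
                \<Rightarrow> nat \<Rightarrow> real \<Rightarrow> real" where
  "learner a b N F y t u =
     (\<Sum>i=1..N. (weight a b N F y i t / (\<Sum>j=1..N. weight a b N F y j t)) * F i t u)"

end

theory Submission
  imports Defs
begin

(* With CRPS(F, y) the squared L2-distance between F and the step function at y, the map
   g \<mapsto> exp (- \<parallel>g\<parallel>\<^sup>2 / (2 (b - a))) is concave along segments of functions with values in [-1, 1]:
   the second derivative along a segment is nonpositive because \<parallel>g\<parallel>\<^sup>2 \<le> b - a and by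
   Cauchy-Schwarz.  Concavity gives, for the learner's mixture F_t = \<Sum> v_i F_{i,t},
   \<Sum> v_i exp (- CRPS(F_{i,t}, y_t) / (2 (b - a))) \<le> exp (- CRPS(F_t, y_t) / (2 (b - a))),
   i.e. the total weight W_{t+1} is at most W_t exp (- CRPS(F_t, y_t) / (2 (b - a))).
   Telescoping and W_1 = 1 bound W_{T+1} by exp (- L_T / (2 (b - a))) for the learner's
   cumulative loss L_T, while W_{T+1} \<ge> w_{i,T+1} = exp (- L_{i,T} / (2 (b - a))) / N. *)

lemma quadratic_nonneg_imp_Cauchy_Schwarz:
  fixes P Q R :: real
  assumes "0 \<le> R" and nonneg: "\<And>t. 0 \<le> P - 2 * t * Q + t\<^sup>2 * R"
  shows "Q\<^sup>2 \<le> P * R"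
proof (cases "R = 0")
  case True
  have "Q = 0"
  proof (rule ccontr)
    assume "Q \<noteq> 0"
    then show False
      using nonneg[of "(P + 1) / (2 * Q)"] True by (simp add: field_simps)
  qed
  then show ?thesis using True by simp
next
  case False
  with \<open>0 \<le> R\<close> have "R > 0" by simp
  have "0 \<le> P - 2 * (Q / R) * Q + (Q / R)\<^sup>2 * R" by (rule nonneg)
  also have "\<dots> = (P * R - Q\<^sup>2) / R" using \<open>R > 0\<close> by (simp add: field_simps power2_eq_square)
  finally show ?thesis using \<open>R > 0\<close> by (simp add: zero_le_divide_iff)
qed

lemma DERIV2_nonpos_imp_below_tangent:
  fixes f f' f'' :: "real \<Rightarrow> real"
  assumes "x \<le> y"
    and f': "\<And>s. x \<le> s \<Longrightarrow> s \<le> y \<Longrightarrow> DERIV f s :> f' s"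
    and f'': "\<And>s. x \<le> s \<Longrightarrow> s \<le> y \<Longrightarrow> DERIV f' s :> f'' s"
    and nonpos: "\<And>s. x \<le> s \<Longrightarrow> s \<le> y \<Longrightarrow> f'' s \<le> 0"
  shows "f y \<le> f x + (y - x) * f' x"
proof -
  have f'_le: "f' s \<le> f' x" if "x \<le> s" "s \<le> y" for s
  proof (rule DERIV_nonpos_imp_nonincreasing[of x s f'])
    fix r assume "x \<le> r" "r \<le> s"
    with that show "\<exists>d. DERIV f' r :> d \<and> d \<le> 0"
      using f'' nonpos by (meson order_trans)
  qed (fact \<open>x \<le> s\<close>)
  have "f y - y * f' x \<le> f x - x * f' x"
  proof (rule DERIV_nonpos_imp_nonincreasing[of x y "\<lambda>s. f s - s * f' x"])
    fix s assume "x \<le> s" "s \<le> y"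
    then show "\<exists>d. DERIV (\<lambda>s. f s - s * f' x) s :> d \<and> d \<le> 0"
      using f'_le f' by (intro exI[of _ "f' s - f' x"]) (auto intro!: derivative_eq_intros)
  qed (fact \<open>x \<le> y\<close>)
  then show ?thesis by (simp add: left_diff_distrib)
qed

(* P, Q, R play the roles of \<parallel>f\<parallel>\<^sup>2, \<langle>f, g\<rangle>, \<parallel>g\<parallel>\<^sup>2, and q s = \<parallel>f + s (g - f)\<parallel>\<^sup>2. *)
lemma exp_neg_quadratic_below_tangent:
  fixes c P Q R :: real
  assumes "c > 0" and P: "0 \<le> P" "P \<le> c" and R: "0 \<le> R" "R \<le> c"
    and Cauchy_Schwarz: "Q\<^sup>2 \<le> P * R"
  shows "exp (- R / (2 * c)) \<le> exp (- P / (2 * c)) * (1 - (Q - P) / c)"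
proof -
  define \<eta> where "\<eta> = 1 / (2 * c)"
  define \<beta> where "\<beta> = Q - P"
  define \<gamma> where "\<gamma> = P - 2 * Q + R"
  define q where "q s = P + 2 * \<beta> * s + \<gamma> * s\<^sup>2" for s
  define q' where "q' s = 2 * \<beta> + 2 * \<gamma> * s" for s
  define \<phi> where "\<phi> s = exp (- \<eta> * q s)" for s
  define \<phi>' where "\<phi>' s = - \<eta> * q' s * \<phi> s" for s
  define \<phi>'' where "\<phi>'' s = \<eta> * \<phi> s * (\<eta> * (q' s)\<^sup>2 - 2 * \<gamma>)" for s
  have "\<eta> > 0" using \<open>c > 0\<close> by (simp add: \<eta>_def)
  have "4 * (P * R) \<le> (P + R)\<^sup>2"
    using zero_le_power2[of "P - R"] unfolding power2_diff power2_sum by linarith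
  with Cauchy_Schwarz have "(2 * Q)\<^sup>2 \<le> (P + R)\<^sup>2"
    unfolding power_mult_distrib by simp
  then have "2 * Q \<le> P + R"
    by (rule power2_le_imp_le) (use P R in simp)
  then have "0 \<le> \<gamma>" by (simp add: \<gamma>_def)
  have q_deriv: "DERIV q s :> q' s" for s
    unfolding q_def q'_def by (auto intro!: derivative_eq_intros simp: power2_eq_square)
  have "\<phi>'' s \<le> 0" if "0 \<le> s" "s \<le> 1" for s
  proof -
    have "q s = (1 - s) * P + s * R - s * (1 - s) * \<gamma>"
      unfolding q_def \<gamma>_def \<beta>_def by (simp add: algebra_simps power2_eq_square)
    moreover have "(1 - s) * P + s * R \<le> (1 - s) * c + s * c"
      using that P R by (intro add_mono mult_left_mono) auto
    moreover have "0 \<le> s * (1 - s) * \<gamma>" using that \<open>0 \<le> \<gamma>\<close> by simp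
    ultimately have "q s \<le> c" by (simp add: algebra_simps)
    have "(q' s)\<^sup>2 = 4 * (q s * \<gamma> - (P * R - Q\<^sup>2))"
      unfolding q'_def q_def \<gamma>_def \<beta>_def by (simp add: algebra_simps power2_eq_square)
    also have "\<dots> \<le> 4 * (c * \<gamma>)"
      using mult_right_mono[OF \<open>q s \<le> c\<close> \<open>0 \<le> \<gamma>\<close>] Cauchy_Schwarz
      by (intro mult_left_mono) auto
    finally have "\<eta> * (q' s)\<^sup>2 \<le> \<eta> * (4 * (c * \<gamma>))"
      using \<open>\<eta> > 0\<close> by (intro mult_left_mono) auto
    also have "\<eta> * (4 * (c * \<gamma>)) = 2 * \<gamma>"
      using \<open>c > 0\<close> by (simp add: \<eta>_def)
    finally show ?thesis
      unfolding \<phi>''_def \<phi>_def using \<open>\<eta> > 0\<close> by (intro mult_nonneg_nonpos) simp_all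
  qed
  moreover have "DERIV \<phi> s :> \<phi>' s" for s
    unfolding \<phi>_def \<phi>'_def using q_deriv
    by (auto intro!: derivative_eq_intros)
  moreover have "DERIV \<phi>' s :> \<phi>'' s" for s
    unfolding \<phi>'_def \<phi>''_def \<phi>_def q'_def using q_deriv
    by (auto intro!: derivative_eq_intros simp: q'_def algebra_simps power2_eq_square)
  ultimately have "\<phi> 1 \<le> \<phi> 0 + (1 - 0) * \<phi>' 0"
    by (intro DERIV2_nonpos_imp_below_tangent) auto
  moreover have "q 0 = P" "q 1 = R" unfolding q_def \<beta>_def \<gamma>_def by simp_all
  ultimately show ?thesis
    unfolding \<phi>'_def \<phi>_def q'_def \<beta>_def \<eta>_def using \<open>c > 0\<close> by (simp add: field_simps)
qed

definition bounded_measurable_on :: "real set \<Rightarrow> (real \<Rightarrow> real) \<Rightarrow> bool" where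
  "bounded_measurable_on S f \<longleftrightarrow> f \<in> borel_measurable (lebesgue_on S) \<and> bounded (f ` S)"

lemma bounded_measurable_on_const: "bounded_measurable_on S (\<lambda>u. c)"
  unfolding bounded_measurable_on_def bounded_iff by (auto intro: exI[of _ "\<bar>c\<bar>"])

lemma bounded_measurable_on_add:
  "bounded_measurable_on S f \<Longrightarrow> bounded_measurable_on S g \<Longrightarrow> bounded_measurable_on S (\<lambda>u. f u + g u)"
  unfolding bounded_measurable_on_def by (auto intro!: bounded_plus_comp borel_measurable_add)

lemma bounded_measurable_on_diff:
  "bounded_measurable_on S f \<Longrightarrow> bounded_measurable_on S g \<Longrightarrow> bounded_measurable_on S (\<lambda>u. f u - g u)"
  unfolding bounded_measurable_on_def by (auto intro!: bounded_minus_comp borel_measurable_diff)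

lemma bounded_measurable_on_mult:
  assumes "bounded_measurable_on S f" and "bounded_measurable_on S g"
  shows "bounded_measurable_on S (\<lambda>u. f u * g u)"
proof -
  obtain K L where K: "\<And>u. u \<in> S \<Longrightarrow> \<bar>f u\<bar> \<le> K" and L: "\<And>u. u \<in> S \<Longrightarrow> \<bar>g u\<bar> \<le> L"
    using assms unfolding bounded_measurable_on_def bounded_iff real_norm_def by blast
  have "\<bar>f u * g u\<bar> \<le> K * L" if "u \<in> S" for u
    unfolding abs_mult using K[OF that] L[OF that]
    by (intro mult_mono) (auto intro: order_trans[OF abs_ge_zero])
  then have "bounded ((\<lambda>u. f u * g u) ` S)"
    unfolding bounded_iff by (intro exI[of _ "K * L"]) auto
  then show ?thesis
    using assms unfolding bounded_measurable_on_def by auto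
qed

lemma bounded_measurable_on_sum:
  "finite I \<Longrightarrow> (\<And>i. i \<in> I \<Longrightarrow> bounded_measurable_on S (f i))
    \<Longrightarrow> bounded_measurable_on S (\<lambda>u. \<Sum>i\<in>I. f i u)"
  by (induction I rule: finite_induct)
    (auto intro: bounded_measurable_on_add simp: bounded_measurable_on_const[of S 0, simplified])

lemma mono_on_imp_bounded_measurable_on:
  assumes "mono_on {a..b} f"
  shows "bounded_measurable_on {a..b} f"
proof -
  have "\<bar>f u\<bar> \<le> \<bar>f a\<bar> + \<bar>f b\<bar>" if "u \<in> {a..b}" for u
    using that mono_onD[OF assms, of a u] mono_onD[OF assms, of u b] by auto
  then have "bounded (f ` {a..b})"
    unfolding bounded_iff by (intro exI[of _ "\<bar>f a\<bar> + \<bar>f b\<bar>"]) auto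
  then show ?thesis
    using borel_measurable_integrable[OF integrable_mono_on[OF assms]]
    unfolding bounded_measurable_on_def by blast
qed

lemma bounded_measurable_on_integrable:
  assumes "bounded_measurable_on {a..b} f"
  shows "f integrable_on {a..b}"
proof -
  have "(\<lambda>x. f x * 1) absolutely_integrable_on {a..b}"
    using assms unfolding bounded_measurable_on_def
    by (intro absolutely_integrable_bounded_measurable_product_real) auto
  then show ?thesis by (simp add: absolutely_integrable_on_def)
qed

lemma integral_square_bounds:
  assumes "a \<le> b" and "bounded_measurable_on {a..b} f" and "\<And>u. u \<in> {a..b} \<Longrightarrow> \<bar>f u\<bar> \<le> 1"
  shows "0 \<le> integral {a..b} (\<lambda>u. (f u)\<^sup>2)" and "integral {a..b} (\<lambda>u. (f u)\<^sup>2) \<le> b - a"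
proof -
  have int: "(\<lambda>u. (f u)\<^sup>2) integrable_on {a..b}"
    unfolding power2_eq_square
    by (intro bounded_measurable_on_integrable bounded_measurable_on_mult assms(2))
  show "0 \<le> integral {a..b} (\<lambda>u. (f u)\<^sup>2)" by (rule integral_nonneg[OF int]) simp
  have "integral {a..b} (\<lambda>u. (f u)\<^sup>2) \<le> integral {a..b} (\<lambda>u. 1)"
  proof (rule integral_le[OF int])
    show "(\<lambda>u. 1::real) integrable_on {a..b}" using integrable_const[of "1::real" a b] by simp
    show "(f u)\<^sup>2 \<le> 1" if "u \<in> {a..b}" for u
      using assms(3)[OF that] by (simp add: abs_square_le_1)
  qed
  then show "integral {a..b} (\<lambda>u. (f u)\<^sup>2) \<le> b - a" using \<open>a \<le> b\<close> by simp
qed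

lemma integral_Cauchy_Schwarz:
  assumes f: "bounded_measurable_on {a..b} f" and g: "bounded_measurable_on {a..b} g"
  shows "(integral {a..b} (\<lambda>u. f u * g u))\<^sup>2
    \<le> integral {a..b} (\<lambda>u. (f u)\<^sup>2) * integral {a..b} (\<lambda>u. (g u)\<^sup>2)"
proof (rule quadratic_nonneg_imp_Cauchy_Schwarz)
  have int_mult: "(\<lambda>u. h u * k u) integrable_on {a..b}"
    if "bounded_measurable_on {a..b} h" "bounded_measurable_on {a..b} k" for h k
    using that by (intro bounded_measurable_on_integrable bounded_measurable_on_mult)
  have int_square: "(\<lambda>u. (h u)\<^sup>2) integrable_on {a..b}" if "bounded_measurable_on {a..b} h" for h
    using int_mult[OF that that] unfolding power2_eq_square .
  show "0 \<le> integral {a..b} (\<lambda>u. (g u)\<^sup>2)"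
    by (rule integral_nonneg[OF int_square[OF g]]) simp
  fix t :: real
  have expand: "(x - t * y)\<^sup>2 = x\<^sup>2 - 2 * t * (x * y) + t\<^sup>2 * y\<^sup>2" for x y :: real
    by (simp add: power2_eq_square algebra_simps)
  have "bounded_measurable_on {a..b} (\<lambda>u. f u - t * g u)"
    by (intro bounded_measurable_on_diff bounded_measurable_on_mult bounded_measurable_on_const f g)
  then have "0 \<le> integral {a..b} (\<lambda>u. (f u - t * g u)\<^sup>2)"
    by (intro integral_nonneg int_square) simp_all
  also have "\<dots> = integral {a..b} (\<lambda>u. (f u)\<^sup>2 - 2 * t * (f u * g u) + t\<^sup>2 * (g u)\<^sup>2)"
    unfolding expand ..
  also have "\<dots> = integral {a..b} (\<lambda>u. (f u)\<^sup>2)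
      - 2 * t * integral {a..b} (\<lambda>u. f u * g u) + t\<^sup>2 * integral {a..b} (\<lambda>u. (g u)\<^sup>2)"
  proof -
    note i1 = int_square[OF f]
    have i2: "(\<lambda>u. 2 * t * (f u * g u)) integrable_on {a..b}"
      by (rule integrable_on_mult_right[OF int_mult[OF f g]])
    have i3: "(\<lambda>u. t\<^sup>2 * (g u)\<^sup>2) integrable_on {a..b}"
      by (rule integrable_on_mult_right[OF int_square[OF g]])
    show ?thesis
      by (simp only: integral_add[OF integrable_diff[OF i1 i2] i3] integral_diff[OF i1 i2]
          integral_mult_right)
  qed
  finally show "0 \<le> integral {a..b} (\<lambda>u. (f u)\<^sup>2) - 2 * t * integral {a..b} (\<lambda>u. f u * g u)
      + t\<^sup>2 * integral {a..b} (\<lambda>u. (g u)\<^sup>2)" .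
qed

lemma exp_integral_square_below_tangent:
  assumes "a < b"
    and f: "bounded_measurable_on {a..b} f" "\<And>u. u \<in> {a..b} \<Longrightarrow> \<bar>f u\<bar> \<le> 1"
    and g: "bounded_measurable_on {a..b} g" "\<And>u. u \<in> {a..b} \<Longrightarrow> \<bar>g u\<bar> \<le> 1"
  shows "exp (- integral {a..b} (\<lambda>u. (g u)\<^sup>2) / (2 * (b - a)))
    \<le> exp (- integral {a..b} (\<lambda>u. (f u)\<^sup>2) / (2 * (b - a)))
      * (1 - (integral {a..b} (\<lambda>u. f u * g u) - integral {a..b} (\<lambda>u. (f u)\<^sup>2)) / (b - a))"
  using \<open>a < b\<close> integral_square_bounds[OF _ f] integral_square_bounds[OF _ g]
  by (intro exp_neg_quadratic_below_tangent integral_Cauchy_Schwarz f g) auto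

lemma abs_convex_combination_le:
  fixes v x :: "'i \<Rightarrow> real"
  assumes "\<And>i. i \<in> I \<Longrightarrow> 0 \<le> v i" and "sum v I = 1" and "\<And>i. i \<in> I \<Longrightarrow> \<bar>x i\<bar> \<le> 1"
  shows "\<bar>\<Sum>i\<in>I. v i * x i\<bar> \<le> 1"
proof -
  have "\<bar>\<Sum>i\<in>I. v i * x i\<bar> \<le> (\<Sum>i\<in>I. \<bar>v i * x i\<bar>)" by (rule sum_abs)
  also have "\<dots> \<le> (\<Sum>i\<in>I. v i)"
    using assms(1,3) by (intro sum_mono) (auto simp: abs_mult intro: mult_left_le)
  finally show ?thesis using assms(2) by simp
qed

lemma integral_mult_sum:
  assumes "finite I" and "bounded_measurable_on {a..b} f"
    and "\<And>i. i \<in> I \<Longrightarrow> bounded_measurable_on {a..b} (g i)"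
  shows "(\<Sum>i\<in>I. v i * integral {a..b} (\<lambda>u. f u * g i u))
    = integral {a..b} (\<lambda>u. f u * (\<Sum>i\<in>I. v i * g i u))"
proof -
  have "(\<Sum>i\<in>I. v i * integral {a..b} (\<lambda>u. f u * g i u))
      = (\<Sum>i\<in>I. integral {a..b} (\<lambda>u. v i * (f u * g i u)))"
    by simp
  also have "\<dots> = integral {a..b} (\<lambda>u. \<Sum>i\<in>I. v i * (f u * g i u))"
    using assms by (intro integral_sum[symmetric] integrable_on_mult_right
        bounded_measurable_on_integrable bounded_measurable_on_mult) auto
  finally show ?thesis by (simp add: sum_distrib_left mult.left_commute)
qed

lemma exp_integral_square_mixture_le:
  assumes "a < b" and "finite I" and v: "\<And>i. i \<in> I \<Longrightarrow> 0 \<le> v i" "sum v I = 1"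
    and g: "\<And>i. i \<in> I \<Longrightarrow> bounded_measurable_on {a..b} (g i)"
      "\<And>i u. i \<in> I \<Longrightarrow> u \<in> {a..b} \<Longrightarrow> \<bar>g i u\<bar> \<le> 1"
  shows "(\<Sum>i\<in>I. v i * exp (- integral {a..b} (\<lambda>u. (g i u)\<^sup>2) / (2 * (b - a))))
    \<le> exp (- integral {a..b} (\<lambda>u. (\<Sum>i\<in>I. v i * g i u)\<^sup>2) / (2 * (b - a)))"
proof -
  define f where "f u = (\<Sum>i\<in>I. v i * g i u)" for u
  have f_bm: "bounded_measurable_on {a..b} f"
    unfolding f_def using g(1)
    by (intro bounded_measurable_on_sum \<open>finite I\<close> bounded_measurable_on_mult bounded_measurable_on_const)
  have f_bound: "\<bar>f u\<bar> \<le> 1" if "u \<in> {a..b}" for u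
    unfolding f_def using v g(2) that by (intro abs_convex_combination_le) auto
  define c where "c = b - a"
  have "c > 0" using \<open>a < b\<close> by (simp add: c_def)
  define P where "P = integral {a..b} (\<lambda>u. (f u)\<^sup>2)"
  define Q where "Q i = integral {a..b} (\<lambda>u. f u * g i u)" for i
  define e where "e = exp (- P / (2 * c))"
  have "(\<Sum>i\<in>I. v i * Q i) = P"
    unfolding Q_def P_def power2_eq_square
    by (subst (2) f_def) (rule integral_mult_sum[OF \<open>finite I\<close> f_bm g(1)])
  have "(\<Sum>i\<in>I. v i * exp (- integral {a..b} (\<lambda>u. (g i u)\<^sup>2) / (2 * c)))
      \<le> (\<Sum>i\<in>I. v i * (e * (1 + P / c) - e / c * Q i))"
  proof (intro sum_mono mult_left_mono v(1))
    fix i assume "i \<in> I"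
    have "e * (1 - (Q i - P) / c) = e * (1 + P / c) - e / c * Q i"
      using \<open>c > 0\<close> by (simp add: field_simps)
    then show "exp (- integral {a..b} (\<lambda>u. (g i u)\<^sup>2) / (2 * c)) \<le> e * (1 + P / c) - e / c * Q i"
      using exp_integral_square_below_tangent[OF \<open>a < b\<close> f_bm f_bound g(1)[OF \<open>i \<in> I\<close>] g(2)[OF \<open>i \<in> I\<close>]]
      unfolding e_def P_def Q_def c_def by simp
  qed
  also have "\<dots> = e * (1 + P / c) * (\<Sum>i\<in>I. v i) - e / c * (\<Sum>i\<in>I. v i * Q i)"
    by (simp add: sum_subtractf sum_distrib_left sum.distrib sum_divide_distrib algebra_simps)
  also have "\<dots> = e"
    using \<open>c > 0\<close> \<open>(\<Sum>i\<in>I. v i * Q i) = P\<close> v(2) by (simp add: field_simps)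
  finally show ?thesis unfolding e_def P_def f_def c_def .
qed

lemma heaviside_bounded_measurable_on: "bounded_measurable_on {a..b} (\<lambda>u. heaviside (u - z))"
  by (rule mono_on_imp_bounded_measurable_on) (auto simp: mono_on_def heaviside_def)

lemma prob_dist_fun_bounded_measurable_on: "prob_dist_fun a b F \<Longrightarrow> bounded_measurable_on {a..b} F"
  unfolding prob_dist_fun_def by (blast intro: mono_on_imp_bounded_measurable_on)

lemma prob_dist_fun_minus_heaviside_abs_le:
  "prob_dist_fun a b F \<Longrightarrow> u \<in> {a..b} \<Longrightarrow> \<bar>F u - heaviside (u - z)\<bar> \<le> 1"
  unfolding prob_dist_fun_def heaviside_def by auto

context
  fixes a b :: real and N :: nat and F :: "nat \<Rightarrow> nat \<Rightarrow> real \<Rightarrow> real" and y :: "nat \<Rightarrow> real"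
begin

definition total_weight :: "nat \<Rightarrow> real" where
  "total_weight t = (\<Sum>j=1..N. weight a b N F y j t)"

lemma weight_Suc:
  "weight a b N F y i (Suc n) = exp (- (\<Sum>t=1..n. CRPS a b (F i t) (y t)) / (2 * (b - a))) / real N"
proof (induction n)
  case (Suc n)
  then show ?case
    by (simp add: sum.cl_ivl_Suc add_divide_distrib diff_divide_distrib exp_add[symmetric])
qed simp

lemma weight_pos: "1 \<le> N \<Longrightarrow> 0 < weight a b N F y i t"
  by (cases t) (simp_all add: weight_Suc)

lemma total_weight_pos: "1 \<le> N \<Longrightarrow> 0 < total_weight t"
  unfolding total_weight_def by (intro sum_pos weight_pos) auto

lemma total_weight_one: "1 \<le> N \<Longrightarrow> total_weight 1 = 1"
  by (simp add: total_weight_def)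

lemma learner_minus_heaviside:
  assumes "1 \<le> N"
  shows "learner a b N F y t u - heaviside (u - z)
    = (\<Sum>j=1..N. weight a b N F y j t / total_weight t * (F j t u - heaviside (u - z)))"
proof -
  let ?v = "\<lambda>j. weight a b N F y j t / total_weight t"
  have "(\<Sum>j=1..N. ?v j) = total_weight t / total_weight t"
    unfolding total_weight_def by (rule sum_divide_distrib[symmetric])
  then have "(\<Sum>j=1..N. ?v j) = 1"
    using total_weight_pos[OF assms, of t] by simp
  moreover have "(\<Sum>j=1..N. ?v j * (F j t u - heaviside (u - z)))
      = (\<Sum>j=1..N. ?v j * F j t u) - (\<Sum>j=1..N. ?v j) * heaviside (u - z)"
    by (simp only: right_diff_distrib sum_subtractf sum_distrib_right)
  ultimately show ?thesis
    unfolding learner_def total_weight_def[symmetric] by simp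
qed

lemma total_weight_Suc_le:
  assumes "a < b" and "1 \<le> N" and "1 \<le> t" and pdf: "\<And>j. j \<in> {1..N} \<Longrightarrow> prob_dist_fun a b (F j t)"
  shows "total_weight (Suc t)
    \<le> total_weight t * exp (- CRPS a b (learner a b N F y t) (y t) / (2 * (b - a)))"
proof -
  define v where "v j = weight a b N F y j t / total_weight t" for j
  have "total_weight (Suc t)
      = total_weight t * (\<Sum>j=1..N. v j * exp (- CRPS a b (F j t) (y t) / (2 * (b - a))))"
    using \<open>1 \<le> t\<close> total_weight_pos[OF \<open>1 \<le> N\<close>, of t]
    by (cases t) (simp_all add: total_weight_def v_def sum_distrib_left)
  also have "\<dots> \<le> total_weight t * exp (- CRPS a b (learner a b N F y t) (y t) / (2 * (b - a)))"
  proof (intro mult_left_mono less_imp_le[OF total_weight_pos[OF \<open>1 \<le> N\<close>]])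
    have "(\<Sum>j=1..N. v j) = total_weight t / total_weight t"
      unfolding v_def total_weight_def by (rule sum_divide_distrib[symmetric])
    then have "(\<Sum>j=1..N. v j) = 1"
      using total_weight_pos[OF \<open>1 \<le> N\<close>, of t] by simp
    then show "(\<Sum>j=1..N. v j * exp (- CRPS a b (F j t) (y t) / (2 * (b - a))))
        \<le> exp (- CRPS a b (learner a b N F y t) (y t) / (2 * (b - a)))"
      unfolding CRPS_def learner_minus_heaviside[OF \<open>1 \<le> N\<close>] v_def[symmetric]
      using pdf \<open>1 \<le> N\<close>
      by (intro exp_integral_square_mixture_le \<open>a < b\<close> bounded_measurable_on_diff
          heaviside_bounded_measurable_on prob_dist_fun_bounded_measurable_on
          prob_dist_fun_minus_heaviside_abs_le)
        (auto simp: v_def intro!: divide_nonneg_pos less_imp_le[OF weight_pos] total_weight_pos)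
  qed
  finally show ?thesis .
qed

lemma total_weight_Suc_bound:
  assumes "a < b" and "1 \<le> N"
    and pdf: "\<And>j t. j \<in> {1..N} \<Longrightarrow> 1 \<le> t \<Longrightarrow> t \<le> n \<Longrightarrow> prob_dist_fun a b (F j t)"
  shows "total_weight (Suc n)
    \<le> exp (- (\<Sum>t=1..n. CRPS a b (learner a b N F y t) (y t)) / (2 * (b - a)))"
  using pdf
proof (induction n)
  case 0
  then show ?case using total_weight_one[OF \<open>1 \<le> N\<close>] by simp
next
  case (Suc n)
  let ?L = "\<lambda>t. CRPS a b (learner a b N F y t) (y t)"
  have "total_weight (Suc (Suc n)) \<le> total_weight (Suc n) * exp (- ?L (Suc n) / (2 * (b - a)))"
    using Suc.prems by (intro total_weight_Suc_le assms(1,2)) auto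
  also have "\<dots> \<le> exp (- (\<Sum>t=1..n. ?L t) / (2 * (b - a))) * exp (- ?L (Suc n) / (2 * (b - a)))"
    using Suc by (intro mult_right_mono) auto
  also have "\<dots> = exp (- (\<Sum>t=1..Suc n. ?L t) / (2 * (b - a)))"
    by (simp add: sum.cl_ivl_Suc exp_add[symmetric] add_divide_distrib diff_divide_distrib)
  finally show ?case .
qed

end

lemma le_add_ln_of_exp_div_le_exp:
  fixes S S' c n :: real
  assumes "0 < c" and "0 < n" and "exp (- S' / c) / n \<le> exp (- S / c)"
  shows "S \<le> S' + c * ln n"
proof -
  have "exp (- S' / c) \<le> exp (- S / c) * n"
    using assms(3) by (simp add: pos_divide_le_eq[OF \<open>0 < n\<close>])
  also have "\<dots> = exp (- S / c + ln n)"
    by (simp only: exp_add exp_ln[OF \<open>0 < n\<close>])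
  finally have "- S' / c \<le> - S / c + ln n" by simp
  then show ?thesis using \<open>0 < c\<close> by (simp add: field_simps)
qed

theorem mainTheorem4:
  fixes a b :: real and N T :: nat
    and F :: "nat \<Rightarrow> nat \<Rightarrow> real \<Rightarrow> real" and y :: "nat \<Rightarrow> real"
  assumes "a < b" and "N \<ge> 1" and "T \<ge> 1"
    and "\<And>i t. 1 \<le> i \<Longrightarrow> i \<le> N \<Longrightarrow> 1 \<le> t \<Longrightarrow> t \<le> T \<Longrightarrow> prob_dist_fun a b (F i t)"
    and "\<And>t. 1 \<le> t \<Longrightarrow> t \<le> T \<Longrightarrow> y t \<in> {a..b}"
  shows "\<forall>i\<in>{1..N}.
           (\<Sum>t=1..T. CRPS a b (learner a b N F y t) (y t))
             \<le> (\<Sum>t=1..T. CRPS a b (F i t) (y t)) + 2 * (b - a) * ln (real N)"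
proof
  fix i assume "i \<in> {1..N}"
  have "weight a b N F y i (Suc T) \<le> total_weight a b N F y (Suc T)"
    unfolding total_weight_def using \<open>i \<in> {1..N}\<close> \<open>N \<ge> 1\<close>
    by (intro member_le_sum less_imp_le weight_pos) auto
  also have "\<dots> \<le> exp (- (\<Sum>t=1..T. CRPS a b (learner a b N F y t) (y t)) / (2 * (b - a)))"
    using assms(1,2,4) by (intro total_weight_Suc_bound) auto
  finally show "(\<Sum>t=1..T. CRPS a b (learner a b N F y t) (y t))
      \<le> (\<Sum>t=1..T. CRPS a b (F i t) (y t)) + 2 * (b - a) * ln (real N)"
    using \<open>a < b\<close> \<open>N \<ge> 1\<close> unfolding weight_Suc
    by (intro le_add_ln_of_exp_div_le_exp) auto
qed

end
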